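(* Let $\Theta$ be a causal theory over $\mathfrak L$. The map $\Sigma\mapsto\Sigma\cap\mathfrak L$ is a bijection from the set of maximal $\vdash_\Box$-consistent subsets $\Sigma$ of $\mathcal L_\Box$ onto the set of maximal classically consistent subsets of $\mathfrak L$ (i.e. onto $\mathfrak M$).
   Context: $\mathfrak L$ is a classical propositional language; $\mathfrak M$ is the set of its models, identified with the maximal classically consistent subsets of $\mathfrak L$. A causal rule is $\phi\triangleright\psi$ with $\phi,\psi\in\mathfrak L$; a causal theory $\Theta$ is a set of causal rules. $\mathcal L_\Box$ is generated by $\mathfrak L$ and a unary $\Box$. A set $\Sigma\subseteq\mathcal L_\Box$ is $\vdash_\Box$-consistent if the sequent $\Sigma\vdash_\Box$ (empty right side) is not derivable in $\mathbf S_\Theta$, and maximal if it has no proper $\vdash_\Box$-consistent superset. The sequent calculus $\mathbf S_\Theta$ derives sequents $\Gamma\vdash_\Box\Delta$ (collections possibly infinite; derivations well-founded, possibly infinitely branching) via: axiom $p\vdash_\Box p$; $\perp\vdash_\Box$; $\vdash_\Box\top$; weakening and contraction; classical two-sided LK rules for $\neg,\wedge,\vee,\to$ with shared contexts; $\Box$R: if $\phi_1\triangleright\psi_1,\dots,\phi_k\triangleright\psi_k\in\Theta$ and $\psi_1,\dots,\psi_k\vdash_\Box p$ is derivable, from $\Gamma\vdash_\Box\phi_1\wedge\dots\wedge\phi_k,\Delta$ infer $\Gamma\vdash_\Box\Box p,\Delta$; $\Box$L: letting $\{S_j\}_{j\in J}$ be all finite $S_j\subseteq\Theta$ with $\{\psi:\phi\triangleright\psi\in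 S_j\}\vdash_\Box p$ derivable, from $\Gamma,\{\phi:\phi\triangleright\psi\in S_j\}\vdash_\Box\Delta$ for all $j\in J$ infer $\Gamma,\Box p\vdash_\Box\Delta$; multicut: from $\Gamma\vdash_\Box p^m,\Delta$ and $\Gamma',p^n\vdash_\Box\Delta'$ ($m,n>0$) infer $\Gamma,\Gamma'\vdash_\Box\Delta,\Delta'$. *)

theory Defs
  imports Main
begin

datatype 'a fm =
    Atom 'a | Bot | Top | Neg "'a fm" | And "'a fm" "'a fm" | Or "'a fm" "'a fm"
  | Imp "'a fm" "'a fm" | Box "'a fm"

primrec depth :: "'a fm \<Rightarrow> nat" where
  "depth (Atom x) = 0"
| "depth Bot = 0"
| "depth Top = 0"
| "depth (Neg A) = depth A"
| "depth (And A B) = max (depth A) (depth B)"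
| "depth (Or A B) = max (depth A) (depth B)"
| "depth (Imp A B) = max (depth A) (depth B)"
| "depth (Box A) = Suc (depth A)"

definition langL :: "'a fm set" where
  "langL = {A. depth A = 0}"

text \<open>Classical semantics (only used on box-free formulas).\<close>
primrec eval :: "('a \<Rightarrow> bool) \<Rightarrow> 'a fm \<Rightarrow> bool" where
  "eval v (Atom x) = v x"
| "eval v Bot = False"
| "eval v Top = True"
| "eval v (Neg A) = (\<not> eval v A)"
| "eval v (And A B) = (eval v A \<and> eval v B)"
| "eval v (Or A B) = (eval v A \<or> eval v B)"
| "eval v (Imp A B) = (eval v A \<longrightarrow> eval v B)"
| "eval v (Box A) = False"

definition cl_consistent :: "'a fm set \<Rightarrow> bool" where
  "cl_consistent \<Gamma> \<longleftrightarrow> (\<exists>v. \<forall>A\<in>\<Gamma>. eval v A)"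

definition models :: "'a fm set set" where
  "models = {\<Gamma>. \<Gamma> \<subseteq> langL \<and> cl_consistent \<Gamma> \<and>
                 (\<forall>\<Gamma>'. \<Gamma> \<subset> \<Gamma>' \<and> \<Gamma>' \<subseteq> langL \<longrightarrow> \<not> cl_consistent \<Gamma>')}"

fun conjs :: "'a fm list \<Rightarrow> 'a fm" where
  "conjs [] = Top"
| "conjs [A] = A"
| "conjs (A # As) = And A (conjs As)"

text \<open>Causal rules phi |> psi are pairs (phi, psi). Sequents are pairs of (possibly infinite)
  sets, so contraction is built in. The side condition of the Box rules
  (derivability of psi_1,...,psi_k |- p) is supplied by the parameter side;
  Box rules at level n are only available for Box p with depth p < n.\<close>

inductive calc :: "('a fm \<times> 'a fm) set \<Rightarrow> nat \<Rightarrow> ('a fm set \<Rightarrow> 'a fm \<Rightarrow> bool)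
                   \<Rightarrow> 'a fm set \<Rightarrow> 'a fm set \<Rightarrow> bool"
  for \<Theta> n side where
  ax: "calc \<Theta> n side {A} {A}"
| botL: "calc \<Theta> n side {Bot} {}"
| topR: "calc \<Theta> n side {} {Top}"
| weak: "calc \<Theta> n side \<Gamma> \<Delta> \<Longrightarrow> \<Gamma> \<subseteq> \<Gamma>' \<Longrightarrow> \<Delta> \<subseteq> \<Delta>' \<Longrightarrow> calc \<Theta> n side \<Gamma>' \<Delta>'"
| negL: "calc \<Theta> n side \<Gamma> (insert A \<Delta>) \<Longrightarrow> calc \<Theta> n side (insert (Neg A) \<Gamma>) \<Delta>"
| negR: "calc \<Theta> n side (insert A \<Gamma>) \<Delta> \<Longrightarrow> calc \<Theta> n side \<Gamma> (insert (Neg A) \<Delta>)"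
| andL: "calc \<Theta> n side (insert A (insert B \<Gamma>)) \<Delta> \<Longrightarrow> calc \<Theta> n side (insert (And A B) \<Gamma>) \<Delta>"
| andR: "calc \<Theta> n side \<Gamma> (insert A \<Delta>) \<Longrightarrow> calc \<Theta> n side \<Gamma> (insert B \<Delta>)
          \<Longrightarrow> calc \<Theta> n side \<Gamma> (insert (And A B) \<Delta>)"
| orL: "calc \<Theta> n side (insert A \<Gamma>) \<Delta> \<Longrightarrow> calc \<Theta> n side (insert B \<Gamma>) \<Delta>
          \<Longrightarrow> calc \<Theta> n side (insert (Or A B) \<Gamma>) \<Delta>"
| orR: "calc \<Theta> n side \<Gamma> (insert A (insert B \<Delta>)) \<Longrightarrow> calc \<Theta> n side \<Gamma> (insert (Or A B) \<Delta>)"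
| impL: "calc \<Theta> n side \<Gamma> (insert A \<Delta>) \<Longrightarrow> calc \<Theta> n side (insert B \<Gamma>) \<Delta>
          \<Longrightarrow> calc \<Theta> n side (insert (Imp A B) \<Gamma>) \<Delta>"
| impR: "calc \<Theta> n side (insert A \<Gamma>) (insert B \<Delta>) \<Longrightarrow> calc \<Theta> n side \<Gamma> (insert (Imp A B) \<Delta>)"
| boxR: "set rs \<subseteq> \<Theta> \<Longrightarrow> depth p < n \<Longrightarrow> side (snd ` set rs) p
          \<Longrightarrow> calc \<Theta> n side \<Gamma> (insert (conjs (map fst rs)) \<Delta>)
          \<Longrightarrow> calc \<Theta> n side \<Gamma> (insert (Box p) \<Delta>)"
| boxL: "depth p < n \<Longrightarrow>
          (\<And>S. finite S \<Longrightarrow> S \<subseteq> \<Theta> \<Longrightarrow> side (snd ` S) p \<Longrightarrow> calc \<Theta> n side (\<Gamma> \<union> fst ` S) \<Delta>)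
          \<Longrightarrow> calc \<Theta> n side (insert (Box p) \<Gamma>) \<Delta>"
| cut: "calc \<Theta> n side \<Gamma> (insert A \<Delta>) \<Longrightarrow> calc \<Theta> n side (insert A \<Gamma>') \<Delta>'
          \<Longrightarrow> calc \<Theta> n side (\<Gamma> \<union> \<Gamma>') (\<Delta> \<union> \<Delta>')"

text \<open>Stratification by Box depth: lvl Theta n k is the level-k calculus (for k \<le> n);
  the side condition for Box p is derivability at level depth p.\<close>
primrec lvl :: "('a fm \<times> 'a fm) set \<Rightarrow> nat \<Rightarrow> nat \<Rightarrow> 'a fm set \<Rightarrow> 'a fm set \<Rightarrow> bool" where
  "lvl \<Theta> 0 = (\<lambda>k. calc \<Theta> 0 (\<lambda>_ _. False))"
| "lvl \<Theta> (Suc n) = (\<lambda>k. if k \<le> n then lvl \<Theta> n k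
                        else calc \<Theta> (Suc n) (\<lambda>\<Psi> p. lvl \<Theta> n (depth p) \<Psi> {p}))"

definition derivable :: "('a fm \<times> 'a fm) set \<Rightarrow> 'a fm set \<Rightarrow> 'a fm set \<Rightarrow> bool" where
  "derivable \<Theta> \<Gamma> \<Delta> \<longleftrightarrow> (\<exists>n. lvl \<Theta> n n \<Gamma> \<Delta>)"

definition box_consistent :: "('a fm \<times> 'a fm) set \<Rightarrow> 'a fm set \<Rightarrow> bool" where
  "box_consistent \<Theta> \<Sigma> \<longleftrightarrow> \<not> derivable \<Theta> \<Sigma> {}"

definition max_box_consistent :: "('a fm \<times> 'a fm) set \<Rightarrow> 'a fm set \<Rightarrow> bool" where
  "max_box_consistent \<Theta> \<Sigma> \<longleftrightarrow> box_consistent \<Theta> \<Sigma> \<and>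
     (\<forall>\<Sigma>'. \<Sigma> \<subset> \<Sigma>' \<longrightarrow> \<not> box_consistent \<Theta> \<Sigma>')"

end

theory Submission
  imports Defs
begin

text \<open>
  Every valuation v of the atoms extends to a causal valuation of all of
  L_Box: Box p is true iff there are finitely many rules of Theta whose bodies are true
  under v and whose heads derive p. The calculus is sound for causal valuations, so the
  causal theory of v is consistent, and it is maximal because it is complete (it
  contains A or Neg A for every A). Conversely, a maximal consistent set Sigma satisfies
  a truth lemma: Sigma is the causal theory of the valuation reading off its atoms.
  Hence the maximal consistent sets are exactly the causal theories of valuations, and
  the models of L are exactly the classical theories of valuations. Intersecting the
  causal theory of v with L gives the classical theory of v, which determines v; this
  makes the restriction map a bijection.
\<close>

definition side_cond :: "('a fm \<times> 'a fm) set \<Rightarrow> 'a fm set \<Rightarrow> 'a fm \<Rightarrow> bool" where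
  "side_cond \<Theta> \<Psi> p = lvl \<Theta> (depth p) (depth p) \<Psi> {p}"

lemma lvl_below: "k \<le> m \<Longrightarrow> lvl \<Theta> m k = lvl \<Theta> k k"
  by (induction m) (auto simp: le_Suc_eq)

lemma calc_side_cong:
  "calc \<Theta> n s \<Gamma> \<Delta> \<Longrightarrow> (\<And>\<Psi> p. depth p < n \<Longrightarrow> s \<Psi> p = s' \<Psi> p) \<Longrightarrow> calc \<Theta> n s' \<Gamma> \<Delta>"
proof (induction rule: calc.induct)
  case (boxR rs p \<Gamma> \<Delta>)
  then show ?case by (metis calc.boxR)
next
  case (boxL p \<Gamma> \<Delta>)
  then show ?case by (intro calc.boxL) auto
qed (auto intro: calc.intros)

lemma calc_mono_level: "calc \<Theta> n s \<Gamma> \<Delta> \<Longrightarrow> n \<le> m \<Longrightarrow> calc \<Theta> m s \<Gamma> \<Delta>"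
proof (induction rule: calc.induct)
  case (boxR rs p \<Gamma> \<Delta>)
  then show ?case by (intro calc.boxR) auto
next
  case (boxL p \<Gamma> \<Delta>)
  then show ?case by (intro calc.boxL) auto
qed (auto intro: calc.intros)

lemma lvl_diag: "lvl \<Theta> n n = calc \<Theta> n (side_cond \<Theta>)"
proof (cases n)
  case 0
  then show ?thesis
    by (intro ext iffI) (simp_all, erule calc_side_cong; simp)+
next
  case (Suc m)
  have lower: "depth p < Suc m \<Longrightarrow> lvl \<Theta> m (depth p) \<Psi> {p} = side_cond \<Theta> \<Psi> p" for \<Psi> p
    using lvl_below[of "depth p" m \<Theta>] by (simp add: side_cond_def)
  show ?thesis unfolding Suc
    by (intro ext iffI; simp; erule calc_side_cong; simp add: lower)
qed

lemma derivable_iff_calc: "derivable \<Theta> \<Gamma> \<Delta> \<longleftrightarrow> (\<exists>n. calc \<Theta> n (side_cond \<Theta>) \<Gamma> \<Delta>)"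
  by (simp add: derivable_def lvl_diag)

text \<open>Derivable sequents are closed under multicut (the two derivations are lifted to a
  common level).\<close>
lemma derivable_cut:
  assumes "derivable \<Theta> \<Gamma> (insert A \<Delta>)" and "derivable \<Theta> (insert A \<Gamma>') \<Delta>'"
  shows "derivable \<Theta> (\<Gamma> \<union> \<Gamma>') (\<Delta> \<union> \<Delta>')"
proof -
  obtain n m where "calc \<Theta> n (side_cond \<Theta>) \<Gamma> (insert A \<Delta>)"
    and "calc \<Theta> m (side_cond \<Theta>) (insert A \<Gamma>') \<Delta>'"
    using assms unfolding derivable_iff_calc by blast
  then have "calc \<Theta> (max n m) (side_cond \<Theta>) \<Gamma> (insert A \<Delta>)"
    and "calc \<Theta> (max n m) (side_cond \<Theta>) (insert A \<Gamma>') \<Delta>'"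
    by (auto elim!: calc_mono_level)
  then show ?thesis unfolding derivable_iff_calc by (blast intro: calc.cut)
qed

lemma derivable_level0: "calc \<Theta> 0 (side_cond \<Theta>) \<Gamma> \<Delta> \<Longrightarrow> derivable \<Theta> \<Gamma> \<Delta>"
  unfolding derivable_iff_calc by blast

lemma calc_axiom: "A \<in> \<Gamma> \<Longrightarrow> A \<in> \<Delta> \<Longrightarrow> calc \<Theta> n s \<Gamma> \<Delta>"
  by (rule calc.weak[OF calc.ax]) auto

lemma calc_contradiction: "Neg A \<in> \<Gamma> \<Longrightarrow> A \<in> \<Gamma> \<Longrightarrow> calc \<Theta> n s \<Gamma> \<Delta>"
  by (rule calc.weak[OF calc.negL[OF calc.ax]]) auto

section \<open>Causal valuations and soundness\<close>

primrec ceval :: "('a fm \<times> 'a fm) set \<Rightarrow> ('a \<Rightarrow> bool) \<Rightarrow> 'a fm \<Rightarrow> bool" where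
  "ceval \<Theta> v (Atom x) = v x"
| "ceval \<Theta> v Bot = False"
| "ceval \<Theta> v Top = True"
| "ceval \<Theta> v (Neg A) = (\<not> ceval \<Theta> v A)"
| "ceval \<Theta> v (And A B) = (ceval \<Theta> v A \<and> ceval \<Theta> v B)"
| "ceval \<Theta> v (Or A B) = (ceval \<Theta> v A \<or> ceval \<Theta> v B)"
| "ceval \<Theta> v (Imp A B) = (ceval \<Theta> v A \<longrightarrow> ceval \<Theta> v B)"
| "ceval \<Theta> v (Box p) =
     (\<exists>S. finite S \<and> S \<subseteq> \<Theta> \<and> (\<forall>\<phi>\<in>fst ` S. eval v \<phi>) \<and> side_cond \<Theta> (snd ` S) p)"

definition causal_theory :: "('a fm \<times> 'a fm) set \<Rightarrow> ('a \<Rightarrow> bool) \<Rightarrow> 'a fm set" where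
  "causal_theory \<Theta> v = {A. ceval \<Theta> v A}"

lemma ceval_classical: "depth A = 0 \<Longrightarrow> ceval \<Theta> v A = eval v A"
  by (induction A) auto

lemma ceval_conjs: "ceval \<Theta> v (conjs xs) = (\<forall>x\<in>set xs. ceval \<Theta> v x)"
  by (induction xs rule: conjs.induct) auto

text \<open>Soundness: if all of Gamma is causally true then so is some member of Delta.
  Bodies of rules are classical, so their truth is plain classical truth.\<close>
lemma calc_sound:
  assumes classical_rules: "\<forall>(\<phi>, \<psi>) \<in> \<Theta>. \<phi> \<in> langL \<and> \<psi> \<in> langL"
  shows "calc \<Theta> n (side_cond \<Theta>) \<Gamma> \<Delta> \<Longrightarrow> \<forall>A\<in>\<Gamma>. ceval \<Theta> v A \<Longrightarrow> \<exists>B\<in>\<Delta>. ceval \<Theta> v B"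
proof (induction rule: calc.induct)
  have bodies: "S \<subseteq> \<Theta> \<Longrightarrow> \<phi> \<in> fst ` S \<Longrightarrow> ceval \<Theta> v \<phi> = eval v \<phi>" for S \<phi>
    using classical_rules by (intro ceval_classical) (auto simp: langL_def)
  {
    case (boxR rs p \<Gamma> \<Delta>)
    then have "ceval \<Theta> v (conjs (map fst rs)) \<Longrightarrow> ceval \<Theta> v (Box p)"
      using bodies[of "set rs"] by (auto simp: ceval_conjs intro!: exI[of _ "set rs"])
    then show ?case using boxR.IH boxR.prems by blast
  next
    case (boxL p \<Gamma> \<Delta>)
    then obtain S where "finite S" "S \<subseteq> \<Theta>" "\<forall>\<phi>\<in>fst ` S. eval v \<phi>" "side_cond \<Theta> (snd ` S) p"
      by auto
    moreover have "\<forall>A\<in>\<Gamma> \<union> fst ` S. ceval \<Theta> v A"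
      using calculation bodies boxL.prems by blast
    ultimately show ?case using boxL.IH by blast
  }
qed auto

text \<open>Hence the causal theory of any valuation is a maximal consistent set: it is
  consistent by soundness and complete with respect to negation.\<close>
lemma causal_theory_max_consistent:
  assumes "\<forall>(\<phi>, \<psi>) \<in> \<Theta>. \<phi> \<in> langL \<and> \<psi> \<in> langL"
  shows "max_box_consistent \<Theta> (causal_theory \<Theta> v)"
proof -
  have "\<forall>A\<in>causal_theory \<Theta> v. ceval \<Theta> v A" by (simp add: causal_theory_def)
  then have "\<not> calc \<Theta> n (side_cond \<Theta>) (causal_theory \<Theta> v) {}" for n
    using calc_sound[OF assms, of n "causal_theory \<Theta> v" "{}" v] by blast
  then have "box_consistent \<Theta> (causal_theory \<Theta> v)"
    by (simp add: box_consistent_def derivable_iff_calc)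
  moreover have "\<not> box_consistent \<Theta> \<Sigma>'" if larger: "causal_theory \<Theta> v \<subset> \<Sigma>'" for \<Sigma>'
  proof -
    obtain A where A: "A \<in> \<Sigma>'" "A \<notin> causal_theory \<Theta> v"
      using larger by blast
    then have "Neg A \<in> causal_theory \<Theta> v" by (simp add: causal_theory_def)
    then have "Neg A \<in> \<Sigma>'" using larger by blast
    then have "calc \<Theta> 0 (side_cond \<Theta>) \<Sigma>' {}" using A(1) by (rule calc_contradiction)
    then show ?thesis unfolding box_consistent_def using derivable_level0 by blast
  qed
  ultimately show ?thesis by (simp add: max_box_consistent_def)
qed

section \<open>Maximal consistent sets\<close>

definition atom_valuation :: "'a fm set \<Rightarrow> 'a \<Rightarrow> bool" where
  "atom_valuation \<Sigma> x \<longleftrightarrow> Atom x \<in> \<Sigma>"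

context
  fixes \<Theta> :: "('a fm \<times> 'a fm) set" and \<Sigma> :: "'a fm set"
  assumes max_cons: "max_box_consistent \<Theta> \<Sigma>"
begin

lemma mc_consistent: "\<not> derivable \<Theta> \<Sigma> {}"
  using max_cons by (simp add: max_box_consistent_def box_consistent_def)

lemma mc_level0_consistent: "\<not> calc \<Theta> 0 (side_cond \<Theta>) \<Sigma> {}"
  using mc_consistent derivable_level0 by blast

text \<open>Sigma is deductively closed: by maximality, A outside Sigma is refutable from Sigma,
  and a cut with a derivation of A would make Sigma inconsistent.\<close>
lemma mc_closed: "derivable \<Theta> \<Gamma> {A} \<Longrightarrow> \<Gamma> \<subseteq> \<Sigma> \<Longrightarrow> A \<in> \<Sigma>"
proof (rule ccontr)
  assume der: "derivable \<Theta> \<Gamma> {A}" and sub: "\<Gamma> \<subseteq> \<Sigma>" and "A \<notin> \<Sigma>"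
  then have "derivable \<Theta> (insert A \<Sigma>) {}"
    using max_cons unfolding max_box_consistent_def box_consistent_def by blast
  then have "derivable \<Theta> (\<Gamma> \<union> \<Sigma>) ({} \<union> {})"
    using derivable_cut[of \<Theta> \<Gamma> A "{}"] der by simp
  then show False using mc_consistent sub by (simp add: Un_absorb1)
qed

lemma mc_closed0: "calc \<Theta> 0 (side_cond \<Theta>) \<Gamma> {A} \<Longrightarrow> \<Gamma> \<subseteq> \<Sigma> \<Longrightarrow> A \<in> \<Sigma>"
  using mc_closed derivable_level0 by blast

lemma mc_Neg: "Neg A \<in> \<Sigma> \<longleftrightarrow> A \<notin> \<Sigma>"
proof
  assume "Neg A \<in> \<Sigma>"
  then show "A \<notin> \<Sigma>" using mc_level0_consistent calc_contradiction by blast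
next
  assume "A \<notin> \<Sigma>"
  then obtain n where "calc \<Theta> n (side_cond \<Theta>) (insert A \<Sigma>) {}"
    using max_cons unfolding max_box_consistent_def box_consistent_def derivable_iff_calc
    by blast
  then have "calc \<Theta> n (side_cond \<Theta>) \<Sigma> {Neg A}"
    using calc.negR[of \<Theta> n _ A \<Sigma> "{}"] by simp
  then show "Neg A \<in> \<Sigma>" by (intro mc_closed[of \<Sigma>]) (auto simp: derivable_iff_calc)
qed

lemma mc_Bot: "Bot \<notin> \<Sigma>"
proof
  assume "Bot \<in> \<Sigma>"
  then have "calc \<Theta> 0 (side_cond \<Theta>) \<Sigma> {}" by (intro calc.weak[OF calc.botL]) auto
  then show False using mc_level0_consistent by blast
qed

lemma mc_Top: "Top \<in> \<Sigma>"
  using mc_closed0[OF calc.topR] by simp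

lemma mc_And: "And A B \<in> \<Sigma> \<longleftrightarrow> A \<in> \<Sigma> \<and> B \<in> \<Sigma>"
proof -
  have left: "calc \<Theta> 0 (side_cond \<Theta>) {And A B} {C}" if "C \<in> {A, B}" for C
    using that by (intro calc.andL[where \<Gamma> = "{}", simplified] calc_axiom[of C]) auto
  have right: "calc \<Theta> 0 (side_cond \<Theta>) {A, B} {And A B}"
    by (intro calc.andR[where \<Delta> = "{}", simplified] calc_axiom[of A] calc_axiom[of B]) auto
  have "And A B \<in> \<Sigma> \<Longrightarrow> C \<in> \<Sigma>" if "C \<in> {A, B}" for C
    using mc_closed0[OF left[OF that]] by simp
  moreover have "A \<in> \<Sigma> \<Longrightarrow> B \<in> \<Sigma> \<Longrightarrow> And A B \<in> \<Sigma>"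
    using mc_closed0[OF right] by simp
  ultimately show ?thesis by blast
qed

lemma mc_Or: "Or A B \<in> \<Sigma> \<longleftrightarrow> A \<in> \<Sigma> \<or> B \<in> \<Sigma>"
proof -
  have left: "calc \<Theta> 0 (side_cond \<Theta>) {Or A B, Neg A, Neg B} {}"
    by (intro calc.orL calc_contradiction[of A] calc_contradiction[of B]) auto
  have right: "calc \<Theta> 0 (side_cond \<Theta>) {C} {Or A B}" if "C \<in> {A, B}" for C
    using that by (intro calc.orR[where \<Delta> = "{}", simplified] calc_axiom[of C]) auto
  have "\<not> {Or A B, Neg A, Neg B} \<subseteq> \<Sigma>"
    using mc_level0_consistent calc.weak[OF left, of \<Sigma> "{}"] by blast
  then have "Or A B \<in> \<Sigma> \<Longrightarrow> A \<in> \<Sigma> \<or> B \<in> \<Sigma>"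
    using mc_Neg by blast
  moreover have "C \<in> \<Sigma> \<Longrightarrow> Or A B \<in> \<Sigma>" if "C \<in> {A, B}" for C
    using mc_closed0[OF right[OF that]] by simp
  ultimately show ?thesis by blast
qed

lemma mc_Imp: "Imp A B \<in> \<Sigma> \<longleftrightarrow> (A \<in> \<Sigma> \<longrightarrow> B \<in> \<Sigma>)"
proof -
  have modus_ponens: "calc \<Theta> 0 (side_cond \<Theta>) {Imp A B, A} {B}"
    by (rule calc.impL; rule calc_axiom; auto)
  have from_concl: "calc \<Theta> 0 (side_cond \<Theta>) {B} {Imp A B}"
    by (rule calc.impR[where \<Delta> = "{}", simplified], rule calc_axiom; auto)
  have from_neg: "calc \<Theta> 0 (side_cond \<Theta>) {Neg A} {Imp A B}"
    by (rule calc.impR[where \<Delta> = "{}", simplified], rule calc_contradiction[of A]; simp)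
  have "Imp A B \<in> \<Sigma> \<Longrightarrow> A \<in> \<Sigma> \<Longrightarrow> B \<in> \<Sigma>"
    using mc_closed0[OF modus_ponens] by simp
  moreover have "B \<in> \<Sigma> \<Longrightarrow> Imp A B \<in> \<Sigma>"
    using mc_closed0[OF from_concl] by simp
  moreover have "A \<notin> \<Sigma> \<Longrightarrow> Imp A B \<in> \<Sigma>"
    using mc_closed0[OF from_neg] mc_Neg by simp
  ultimately show ?thesis by blast
qed

text \<open>Needed for Box-right, whose premise is the conjunction of the rule bodies.\<close>
lemma mc_conjs: "set xs \<subseteq> \<Sigma> \<Longrightarrow> conjs xs \<in> \<Sigma>"
  by (induction xs rule: conjs.induct) (auto simp: mc_Top mc_And)

text \<open>Box p belongs to Sigma iff some finite set of rules with bodies in Sigma has heads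
  deriving p. The forward direction uses Box-left with, for each candidate rule set, a
  body whose negation lies in Sigma; the backward direction uses Box-right on the
  conjunction of the bodies.\<close>
lemma mc_Box:
  "Box p \<in> \<Sigma> \<longleftrightarrow> (\<exists>S. finite S \<and> S \<subseteq> \<Theta> \<and> fst ` S \<subseteq> \<Sigma> \<and> side_cond \<Theta> (snd ` S) p)"
proof
  assume box: "Box p \<in> \<Sigma>"
  show "\<exists>S. finite S \<and> S \<subseteq> \<Theta> \<and> fst ` S \<subseteq> \<Sigma> \<and> side_cond \<Theta> (snd ` S) p"
  proof (rule ccontr)
    assume no_rules: "\<not> ?thesis"
    have "calc \<Theta> (Suc (depth p)) (side_cond \<Theta>) (insert (Box p) \<Sigma>) {}"
    proof (rule calc.boxL)
      fix S assume "finite S" "S \<subseteq> \<Theta>" "side_cond \<Theta> (snd ` S) p"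
      then obtain \<phi> where "\<phi> \<in> fst ` S" "\<phi> \<notin> \<Sigma>" using no_rules by blast
      then show "calc \<Theta> (Suc (depth p)) (side_cond \<Theta>) (\<Sigma> \<union> fst ` S) {}"
        using mc_Neg by (intro calc_contradiction[of \<phi>]) auto
    qed simp
    then show False using box mc_consistent by (auto simp: derivable_iff_calc insert_absorb)
  qed
next
  assume "\<exists>S. finite S \<and> S \<subseteq> \<Theta> \<and> fst ` S \<subseteq> \<Sigma> \<and> side_cond \<Theta> (snd ` S) p"
  then obtain S where S: "finite S" "S \<subseteq> \<Theta>" "fst ` S \<subseteq> \<Sigma>" "side_cond \<Theta> (snd ` S) p"
    by blast
  obtain rs where rs: "set rs = S" using S(1) finite_list by blast
  have "calc \<Theta> (Suc (depth p)) (side_cond \<Theta>) {conjs (map fst rs)} {Box p}"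
    using calc.boxR[OF _ _ _ calc_axiom, of rs \<Theta> p] S rs by simp
  moreover have "conjs (map fst rs) \<in> \<Sigma>" using S(3) rs by (intro mc_conjs) auto
  ultimately show "Box p \<in> \<Sigma>" by (intro mc_closed) (auto simp: derivable_iff_calc)
qed

lemma mc_classical: "depth A = 0 \<Longrightarrow> A \<in> \<Sigma> \<longleftrightarrow> eval (atom_valuation \<Sigma>) A"
  by (induction A) (auto simp: atom_valuation_def mc_Neg mc_Bot mc_Top mc_And mc_Or mc_Imp)

lemma mc_truth:
  assumes classical_rules: "\<forall>(\<phi>, \<psi>) \<in> \<Theta>. \<phi> \<in> langL \<and> \<psi> \<in> langL"
  shows "\<Sigma> = causal_theory \<Theta> (atom_valuation \<Sigma>)"
proof -
  have "A \<in> \<Sigma> \<longleftrightarrow> ceval \<Theta> (atom_valuation \<Sigma>) A" for A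
  proof (induction A)
    case (Box p)
    have "depth \<phi> = 0" if "S \<subseteq> \<Theta>" "\<phi> \<in> fst ` S" for S \<phi>
      using that classical_rules by (auto simp: langL_def)
    then have "fst ` S \<subseteq> \<Sigma> \<longleftrightarrow> (\<forall>\<phi>\<in>fst ` S. eval (atom_valuation \<Sigma>) \<phi>)"
      if "S \<subseteq> \<Theta>" for S
      using that mc_classical by blast
    then show ?case unfolding mc_Box ceval.simps by meson
  qed (auto simp: atom_valuation_def mc_Neg mc_Bot mc_Top mc_And mc_Or mc_Imp)
  then show ?thesis unfolding causal_theory_def by blast
qed

end

lemma max_consistent_iff_causal_theory:
  assumes "\<forall>(\<phi>, \<psi>) \<in> \<Theta>. \<phi> \<in> langL \<and> \<psi> \<in> langL"
  shows "max_box_consistent \<Theta> \<Sigma> \<longleftrightarrow> (\<exists>v. \<Sigma> = causal_theory \<Theta> v)"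
  using mc_truth[OF _ assms] causal_theory_max_consistent[OF assms] by blast

lemma models_iff: "M \<in> models \<longleftrightarrow> (\<exists>v. M = {A \<in> langL. eval v A})"
proof
  assume M: "M \<in> models"
  then obtain v where v: "\<forall>A\<in>M. eval v A" by (auto simp: models_def cl_consistent_def)
  have "cl_consistent {A \<in> langL. eval v A}" by (auto simp: cl_consistent_def)
  then have "\<not> M \<subset> {A \<in> langL. eval v A}" using M by (auto simp: models_def)
  moreover have "M \<subseteq> {A \<in> langL. eval v A}" using M v by (auto simp: models_def)
  ultimately show "\<exists>v. M = {A \<in> langL. eval v A}" by blast
next
  assume "\<exists>v. M = {A \<in> langL. eval v A}"
  then obtain v where M: "M = {A \<in> langL. eval v A}" by blast
  have "\<not> cl_consistent \<Gamma>'" if larger: "M \<subset> \<Gamma>'" "\<Gamma>' \<subseteq> langL" for \<Gamma>'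
  proof
    assume "cl_consistent \<Gamma>'"
    then obtain w where w: "\<forall>A\<in>\<Gamma>'. eval w A" by (auto simp: cl_consistent_def)
    obtain A where A: "A \<in> \<Gamma>'" "A \<notin> M" using larger(1) by blast
    then have "Neg A \<in> M" using larger(2) M by (auto simp: langL_def)
    then have "Neg A \<in> \<Gamma>'" using larger(1) by blast
    then have "eval w (Neg A)" "eval w A" using w A(1) by blast+
    then show False by simp
  qed
  then show "M \<in> models" using M by (auto simp: models_def cl_consistent_def)
qed

lemma causal_theory_restrict:
  "causal_theory \<Theta> v \<inter> langL = {A \<in> langL. eval v A}"
  by (auto simp: causal_theory_def langL_def ceval_classical)

lemma classical_theory_inj:
  fixes v w :: "'a \<Rightarrow> bool"
  assumes same: "{A \<in> langL. eval v A} = {A \<in> langL. eval w A}"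
  shows "v = w"
proof (rule ext)
  fix x :: 'a
  have "Atom x \<in> langL" by (simp add: langL_def)
  then have "eval v (Atom x) \<longleftrightarrow> eval w (Atom x)"
    using same by (metis (mono_tags, lifting) mem_Collect_eq)
  then show "v x = w x" by simp
qed

lemma restrict_inj_on_causal_theories:
  "inj_on (\<lambda>\<Sigma>. \<Sigma> \<inter> langL) (range (causal_theory \<Theta>))"
proof (rule inj_onI)
  fix \<Sigma>\<^sub>1 \<Sigma>\<^sub>2
  assume "\<Sigma>\<^sub>1 \<in> range (causal_theory \<Theta>)" "\<Sigma>\<^sub>2 \<in> range (causal_theory \<Theta>)"
    and "\<Sigma>\<^sub>1 \<inter> langL = \<Sigma>\<^sub>2 \<inter> langL"
  then obtain v w where "\<Sigma>\<^sub>1 = causal_theory \<Theta> v" "\<Sigma>\<^sub>2 = causal_theory \<Theta> w"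
    and "{A \<in> langL. eval v A} = {A \<in> langL. eval w A}"
    by (auto simp only: causal_theory_restrict)
  then show "\<Sigma>\<^sub>1 = \<Sigma>\<^sub>2" using classical_theory_inj by blast
qed

theorem mainTheorem14:
  fixes \<Theta> :: "('a fm \<times> 'a fm) set"
  assumes "\<forall>(\<phi>, \<psi>) \<in> \<Theta>. \<phi> \<in> langL \<and> \<psi> \<in> langL"
  shows "bij_betw (\<lambda>\<Sigma>. \<Sigma> \<inter> langL) {\<Sigma>. max_box_consistent \<Theta> \<Sigma>} models"
proof -
  have max_sets: "{\<Sigma>. max_box_consistent \<Theta> \<Sigma>} = range (causal_theory \<Theta>)"
    using max_consistent_iff_causal_theory[OF assms] by blast
  have "inj_on (\<lambda>\<Sigma>. \<Sigma> \<inter> langL) (range (causal_theory \<Theta>))"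
    by (rule restrict_inj_on_causal_theories)
  moreover have "(\<lambda>\<Sigma>. \<Sigma> \<inter> langL) ` range (causal_theory \<Theta>) = models"
    unfolding image_image causal_theory_restrict using models_iff by blast
  ultimately show ?thesis unfolding max_sets bij_betw_def by blast
qed

end
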